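(* Let $V$ be a complex vector space of finite dimension $N$. Let $F\in \mathrm{End}(V\otimes V)$ be an involutive symmetry and let $R=R(q)\in \mathrm{End}(V\otimes V)$ be a family of Hecke symmetries depending analytically on $q$ in a neighbourhood of $q=1$, such that $R(1)=F$ and, for each $q$, the braidings $R(q)$ and $F$ are compatible. Put $q=e^h$ and expand $$\mathcal{R}(q):=R(q)\,F = I+h\,r+O(h^2),\qquad r\in \mathrm{End}(V\otimes V).$$ Then (1) $r_{\overline{12}}+r_{\overline{21}}=2F$; (2) $[r_{\overline{12}}, r_{\overline{13}}]+[r_{\overline{12}}, r_{\overline{23}}]+[r_{\overline{13}}, r_{\overline{23}}]=0$ in $\mathrm{End}(V^{\otimes 3})$.
   Context: A braiding is an invertible $R\in\mathrm{End}(V\otimes V)$ with $(R\otimes I)(I\otimes R)(R\otimes I)=(I\otimes R)(R\otimes I)(I\otimes R)$. It is an involutive symmetry if $R^2=I$ and a Hecke symmetry if $(R-qI)(R+q^{-1}I)=0$ with $q\neq\pm1$. For $X\in\mathrm{End}(V\otimes V)$, $X_{12}=X\otimes I$, $X_{23}=I\otimes X$ in $\mathrm{End}(V^{\otimes 3})$. Two braidings $R,F$ are compatible if $R_{12}F_{23}F_{12}=F_{23}F_{12}R_{23}$ and $R_{23}F_{12}F_{23}=F_{12}F_{23}R_{12}$. Overlined indices (transfer by $F$): for $X\in\mathrm{End}(V\otimes V)$, $X_{\overline{12}}=X_{12}$, $X_{\overline{13}}=F_{23}X_{12}F_{23}^{-1}$, $X_{\overline{23}}=F_{12}F_{23}X_{12}F_{23}^{-1}F_{12}^{-1}$,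 and (since $F$ is involutive) $X_{\overline{21}}=F\,X\,F$ (acting on $V\otimes V$). $[A,B]=AB-BA$. *)

theory Defs
  imports "HOL-Analysis.Analysis" "HOL-Library.Landau_Symbols"
begin

text \<open>V = complex^'n (dimension N = CARD('n)); End(V\<otimes>V) = square matrices indexed by 'n \<times> 'n;
  End(V\<otimes>V\<otimes>V) = square matrices indexed by 'n \<times> 'n \<times> 'n.\<close>

type_synonym 'n end2 = "complex ^ ('n \<times> 'n) ^ ('n \<times> 'n)"
type_synonym 'n end3 = "complex ^ ('n \<times> 'n \<times> 'n) ^ ('n \<times> 'n \<times> 'n)"

definition kron :: "'a \<Rightarrow> 'a \<Rightarrow> complex" where
  "kron a b = (if a = b then 1 else 0)"

text \<open>X_12 = X \<otimes> I\<close>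
definition leg12 :: "('n::finite) end2 \<Rightarrow> 'n end3" where
  "leg12 X = (\<chi> a b. X $ (fst a, fst (snd a)) $ (fst b, fst (snd b)) * kron (snd (snd a)) (snd (snd b)))"

text \<open>X_23 = I \<otimes> X\<close>
definition leg23 :: "('n::finite) end2 \<Rightarrow> 'n end3" where
  "leg23 X = (\<chi> a b. kron (fst a) (fst b) * X $ (snd a) $ (snd b))"

definition braiding :: "('n::finite) end2 \<Rightarrow> bool" where
  "braiding R \<longleftrightarrow> invertible R \<and>
     leg12 R ** leg23 R ** leg12 R = leg23 R ** leg12 R ** leg23 R"

definition involutive_symmetry :: "('n::finite) end2 \<Rightarrow> bool" where
  "involutive_symmetry R \<longleftrightarrow> braiding R \<and> R ** R = mat 1"

definition scal_id :: "complex \<Rightarrow> complex ^ 'm ^ 'm" where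
  "scal_id c = (\<chi> i j. c * mat 1 $ i $ j)"

definition hecke_symmetry :: "complex \<Rightarrow> ('n::finite) end2 \<Rightarrow> bool" where
  "hecke_symmetry q R \<longleftrightarrow> braiding R \<and> q \<noteq> 1 \<and> q \<noteq> -1 \<and>
     (R - scal_id q) ** (R + scal_id (inverse q)) = 0"

definition compatible :: "('n::finite) end2 \<Rightarrow> 'n end2 \<Rightarrow> bool" where
  "compatible R F \<longleftrightarrow>
     leg12 R ** leg23 F ** leg12 F = leg23 F ** leg12 F ** leg23 R \<and>
     leg23 R ** leg12 F ** leg23 F = leg12 F ** leg23 F ** leg12 R"

definition bar12 :: "('n::finite) end2 \<Rightarrow> 'n end2 \<Rightarrow> 'n end3" where
  "bar12 F X = leg12 X"

definition bar13 :: "('n::finite) end2 \<Rightarrow> 'n end2 \<Rightarrow> 'n end3" where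
  "bar13 F X = leg23 F ** leg12 X ** matrix_inv (leg23 F)"

definition bar23 :: "('n::finite) end2 \<Rightarrow> 'n end2 \<Rightarrow> 'n end3" where
  "bar23 F X = leg12 F ** leg23 F ** leg12 X ** matrix_inv (leg23 F) ** matrix_inv (leg12 F)"

definition bar21 :: "('n::finite) end2 \<Rightarrow> 'n end2 \<Rightarrow> 'n end2" where
  "bar21 F X = F ** X ** F"

definition commut :: "('n::finite) end3 \<Rightarrow> 'n end3 \<Rightarrow> 'n end3" where
  "commut A B = A ** B - B ** A"

end

theory Submission
  imports Defs
begin

(* Restrict to real t and write RF = I + t Z(t) at q = e^t, so that Z(t) tends to r.
   The Hecke relation R^2 = I + (q - 1/q) R then reads
   Z + F Z F + t Z F Z F = ((q - 1/q)/t) (F + t Z F), and t -> 0 gives r + F r F = 2 F.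
   Compatibility with F turns the braid relation of R into the quantum Yang-Baxter equation
   for the transferred legs of RF; after expanding both sides the order-t terms cancel and
   the order-t^2 terms, i.e. the sum of the three commutators of the transferred Z's, equal
   t times a bounded quantity, so the classical Yang-Baxter equation holds in the limit. *)

section \<open>Matrix algebra\<close>

lemma matrix_add_rdistrib: "((A::'a::semiring_1^'m^'n) + B) ** C = A ** C + B ** C"
  by (simp add: matrix_matrix_mult_def vec_eq_iff sum.distrib distrib_right)

lemma matrix_diff_rdistrib: "((A::'a::ring_1^'m^'n) - B) ** C = A ** C - B ** C"
  by (simp add: matrix_matrix_mult_def vec_eq_iff sum_subtractf left_diff_distrib)

lemma scal_id_eq_mat: "scal_id c = mat c"
  by (simp add: scal_id_def mat_def vec_eq_iff)

lemma mat_mult_left: "mat c ** (A::'a::semiring_1^'m^'n) = (\<chi> i j. c * A $ i $ j)"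
  by (simp add: matrix_matrix_mult_def mat_def vec_eq_iff if_distrib if_distribR sum.delta
      cong: if_cong)

lemma mat_mult_commute: "mat c ** (A::'a::comm_semiring_1^'n^'n) = A ** mat c"
  by (simp add: matrix_matrix_mult_def mat_def vec_eq_iff if_distrib if_distribR sum.delta
      mult.commute cong: if_cong)

lemma mat_mult_mat: "mat a ** mat b = (mat (a * b) :: 'a::semiring_1^'n^'n)"
  by (simp add: mat_mult_left) (simp add: mat_def vec_eq_iff)

lemma mat_diff: "mat (a - b) = (mat a - mat b :: 'a::ring_1^'n^'n)"
  by (simp add: mat_def vec_eq_iff)

lemma mat_of_real_mult: "mat (of_real c) ** (A::'a::real_algebra_1^'m^'n) = c *\<^sub>R A"
  by (simp add: mat_mult_left vec_eq_iff) (simp add: scaleR_conv_of_real)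

lemma matrix_inv_involution:
  assumes "(A::'a::semiring_1^'n^'n) ** A = mat 1"
  shows "matrix_inv A = A"
proof -
  have "A ** matrix_inv A = mat 1 \<and> matrix_inv A ** A = mat 1"
    unfolding matrix_inv_def by (rule someI[of _ A]) (simp add: assms)
  then have "matrix_inv A = (A ** A) ** matrix_inv A"
    by (simp add: assms)
  also have "\<dots> = A"
    using \<open>A ** matrix_inv A = mat 1 \<and> _\<close> by (simp flip: matrix_mul_assoc)
  finally show ?thesis .
qed

lemma matrix_triple_product_expand:
  fixes A B C :: "'a::semiring_1^'n^'n"
  shows "(mat 1 + A) ** (mat 1 + B) ** (mat 1 + C) =
    mat 1 + (A + B + C) + (A ** B + A ** C + B ** C) + A ** B ** C"
  by (simp add: matrix_add_ldistrib matrix_add_rdistrib matrix_mul_assoc add_ac)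

lemma matrix_scaleR_mult_scaleR:
  fixes A :: "'a::real_algebra_1^'m^'n"
  shows "(s *\<^sub>R A) ** (t *\<^sub>R B) = (s * t) *\<^sub>R (A ** B)"
  by (simp add: matrix_scalar_ac flip: scalar_matrix_assoc)

lemma matrix_conj_one_plus_scaleR:
  fixes C D Y :: "'a::real_algebra_1^'n^'n"
  assumes "C ** D = mat 1"
  shows "C ** (mat 1 + t *\<^sub>R Y) ** D = mat 1 + t *\<^sub>R (C ** Y ** D)"
  using assms by (simp add: matrix_add_ldistrib matrix_add_rdistrib matrix_scalar_ac
      flip: scalar_matrix_assoc)

lemma tendsto_matrix_mult [tendsto_intros]:
  fixes A :: "'b \<Rightarrow> 'a::real_normed_algebra_1^'m^'n" and B :: "'b \<Rightarrow> 'a^'p^'m"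
  assumes "(A \<longlongrightarrow> a) F" "(B \<longlongrightarrow> b) F"
  shows "((\<lambda>x. A x ** B x) \<longlongrightarrow> a ** b) F"
  unfolding matrix_matrix_mult_def
  by (intro vec_tendstoI) (simp, intro tendsto_intros assms)

section \<open>Tensor legs and transfer by an involutive symmetry\<close>

lemma sum_kron_left: "(\<Sum>k\<in>(UNIV::'a::finite set). kron a k * f k) = (f a :: complex)"
proof -
  have "(\<Sum>k\<in>UNIV. kron a k * f k) = (\<Sum>k\<in>UNIV. if a = k then f k else 0)"
    by (intro sum.cong) (auto simp: kron_def)
  then show ?thesis by simp
qed

lemma sum_UNIV_prod:
  "sum f (UNIV::('a::finite \<times> 'b::finite) set) = (\<Sum>i\<in>UNIV. \<Sum>j\<in>UNIV. f (i, j))"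
  by (simp add: sum.cartesian_product flip: UNIV_Times_UNIV)

lemma leg12_mult: "leg12 (X ** Y) = leg12 X ** leg12 (Y::('n::finite) end2)"
proof -
  have "(leg12 X ** leg12 Y) $ (a1, a2, a3) $ (b1, b2, b3) =
      leg12 (X ** Y) $ (a1, a2, a3) $ (b1, b2, b3)" for a1 a2 a3 b1 b2 b3
    by (simp add: matrix_matrix_mult_def leg12_def sum_UNIV_prod sum_distrib_left sum_distrib_right
        mult_ac sum_kron_left)
  then show ?thesis by (simp add: vec_eq_iff)
qed

lemma leg23_mult: "leg23 (X ** Y) = leg23 X ** leg23 (Y::('n::finite) end2)"
proof -
  have "(leg23 X ** leg23 Y) $ (a1, a2) $ (b1, b2) =
      (\<Sum>i\<in>UNIV. \<Sum>p\<in>UNIV. kron a1 i * (kron i b1 * (X $ a2 $ p * Y $ p $ b2)))"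
    for a1 a2 b1 b2
    by (simp add: matrix_matrix_mult_def leg23_def mult_ac
        sum_UNIV_prod[where 'a='n and 'b="'n \<times> 'n"])
  also have "\<dots> a1 a2 b1 b2 = leg23 (X ** Y) $ (a1, a2) $ (b1, b2)" for a1 a2 b1 b2
    by (subst sum.swap) (simp add: sum_kron_left leg23_def matrix_matrix_mult_def sum_distrib_left)
  finally show ?thesis by (simp add: vec_eq_iff)
qed

lemma leg12_mat_1: "leg12 (mat 1 :: ('n::finite) end2) = mat 1"
  by (auto simp: vec_eq_iff leg12_def mat_def kron_def)

lemma leg23_mat_1: "leg23 (mat 1 :: ('n::finite) end2) = mat 1"
  by (auto simp: vec_eq_iff leg23_def mat_def kron_def)

lemma leg12_add: "leg12 (X + Y) = leg12 X + leg12 (Y::('n::finite) end2)"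
  by (simp add: vec_eq_iff leg12_def distrib_right)

lemma leg12_scaleR: "leg12 (c *\<^sub>R X) = c *\<^sub>R leg12 (X::('n::finite) end2)"
  by (simp add: vec_eq_iff leg12_def)

lemma tendsto_leg12 [tendsto_intros]:
  "(X \<longlongrightarrow> A) F \<Longrightarrow> ((\<lambda>x. leg12 (X x :: ('n::finite) end2)) \<longlongrightarrow> leg12 A) F"
  unfolding leg12_def by (intro vec_tendstoI) (simp, intro tendsto_intros)

lemma leg12_involution: "F ** F = mat 1 \<Longrightarrow> leg12 F ** leg12 F = mat 1"
  by (simp add: leg12_mat_1 flip: leg12_mult)

lemma leg23_involution: "F ** F = mat 1 \<Longrightarrow> leg23 F ** leg23 F = mat 1"
  by (simp add: leg23_mat_1 flip: leg23_mult)

lemma bar13_involution: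
  "F ** F = mat 1 \<Longrightarrow> bar13 F X = leg23 F ** leg12 X ** leg23 F"
  by (simp add: bar13_def matrix_inv_involution leg23_involution)

lemma bar23_involution:
  "F ** F = mat 1 \<Longrightarrow>
    bar23 F X = (leg12 F ** leg23 F) ** leg12 X ** (leg23 F ** leg12 F)"
  by (simp add: bar23_def matrix_inv_involution leg12_involution leg23_involution
      matrix_mul_assoc)

section \<open>The Hecke relation and the quantum Yang-Baxter equation\<close>

lemma hecke_square:
  assumes "hecke_symmetry q R" "q \<noteq> 0"
  shows "R ** R = mat 1 + mat (q - inverse q) ** R"
proof -
  have "0 = (R - mat q) ** (R + mat (inverse q))"
    using assms(1) by (simp add: hecke_symmetry_def scal_id_eq_mat)
  also have "\<dots> = R ** R - mat (q - inverse q) ** R - mat 1"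
    using assms(2) by (simp add: matrix_add_ldistrib matrix_diff_rdistrib mat_mult_mat mat_diff
        mat_mult_commute[of _ R])
  finally show ?thesis by (simp add: algebra_simps)
qed

lemma transferred_yang_baxter:
  fixes F R :: "('n::finite) end2"
  assumes F2: "F ** F = mat 1" and "braiding F" "braiding R" and "compatible R F"
  defines "\<R> \<equiv> R ** F"
  shows "leg12 \<R> ** bar13 F \<R> ** bar23 F \<R> = bar23 F \<R> ** bar13 F \<R> ** leg12 \<R>"
proof -
  define s1 s2 R1 R2 where "s1 = leg12 F" and "s2 = leg23 F" and "R1 = leg12 R" and "R2 = leg23 R"
  have s11: "X ** s1 ** s1 = X" and s22: "X ** s2 ** s2 = X" for X
    unfolding s1_def s2_def
    by (simp_all add: F2 leg12_involution leg23_involution flip: matrix_mul_assoc)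
  have br: "s1 ** s2 ** s1 = s2 ** s1 ** s2" and Rb: "R1 ** R2 ** R1 = R2 ** R1 ** R2"
    using assms(2,3) by (simp_all add: braiding_def s1_def s2_def R1_def R2_def)
  have C1: "R1 ** s2 ** s1 = s2 ** s1 ** R2" and C2: "R2 ** s1 ** s2 = s1 ** s2 ** R1"
    using assms(4) by (simp_all add: compatible_def s1_def s2_def R1_def R2_def)
  have L12: "leg12 \<R> = R1 ** s1"
    by (simp add: \<R>_def R1_def s1_def leg12_mult)
  have B13: "bar13 F \<R> = s2 ** R1 ** s1 ** s2"
    by (simp add: bar13_involution[OF F2] L12 s2_def matrix_mul_assoc)
  have "bar23 F \<R> = s1 ** s2 ** R1 ** s1 ** s2 ** s1"
    by (simp add: bar23_involution[OF F2] L12 s1_def s2_def matrix_mul_assoc)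
  also have "\<dots> = R2 ** s1 ** s1 ** s2 ** s1 ** s1"
    using arg_cong[OF C2, of "\<lambda>z. z ** s1 ** s2 ** s1"]
      arg_cong[OF br, of "\<lambda>z. R2 ** s1 ** z ** s1"]
    by (simp add: matrix_mul_assoc)
  also have "\<dots> = R2 ** s2"
    by (simp add: s11)
  finally have B23: "bar23 F \<R> = R2 ** s2" .
  have "leg12 \<R> ** bar13 F \<R> ** bar23 F \<R> = R1 ** (s1 ** s2 ** R1) ** s1 ** s2 ** R2 ** s2"
    unfolding L12 B13 B23 by (simp add: matrix_mul_assoc)
  also have "\<dots> = R1 ** R2 ** (s1 ** s2 ** s1) ** s2 ** R2 ** s2"
    unfolding C2[symmetric] by (simp add: matrix_mul_assoc)
  also have "\<dots> = R1 ** R2 ** (s2 ** s1 ** R2) ** s2"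
    unfolding br by (simp add: matrix_mul_assoc s22)
  also have "\<dots> = (R1 ** R2 ** R1) ** (s2 ** s1 ** s2)"
    unfolding C1[symmetric] by (simp add: matrix_mul_assoc)
  also have "\<dots> = R2 ** R1 ** (R2 ** s1 ** s2) ** s1"
    unfolding Rb br[symmetric] by (simp add: matrix_mul_assoc)
  also have "\<dots> = R2 ** s2 ** s2 ** R1 ** s1 ** s2 ** R1 ** s1"
    unfolding C2 by (simp add: matrix_mul_assoc s22)
  also have "\<dots> = bar23 F \<R> ** bar13 F \<R> ** leg12 \<R>"
    unfolding L12 B13 B23 by (simp add: matrix_mul_assoc)
  finally show ?thesis .
qed

section \<open>Asymptotics along the real curve q = e^t\<close>

lemma tendsto_exp_minus_inverse_exp_div:
  "((\<lambda>t::real. (exp t - inverse (exp t)) / t) \<longlongrightarrow> 2) (at 0)"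
proof -
  have "((\<lambda>t::real. exp t - exp (- t)) has_real_derivative 2) (at 0)"
    by (auto intro!: derivative_eq_intros)
  then show ?thesis
    by (simp add: DERIV_def exp_minus)
qed

lemma power2_smallo_at_0: "(\<lambda>h::'a::real_normed_field. h ^ 2) \<in> o[at 0](\<lambda>h. h)"
proof (rule smalloI_tendsto)
  have "\<forall>\<^sub>F h in at (0::'a). h = h ^ 2 / h"
    by (auto simp: eventually_at_filter power2_eq_square)
  then show "((\<lambda>h::'a. h ^ 2 / h) \<longlongrightarrow> 0) (at 0)"
    by (rule Lim_transform_eventually[OF tendsto_ident_at])
  show "\<forall>\<^sub>F h in at (0::'a). h \<noteq> 0"
    by (simp add: eventually_at_filter)
qed

lemma filterlim_of_real_at_0:
  "filterlim (of_real :: real \<Rightarrow> 'a::real_normed_div_algebra) (at 0) (at 0)"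
proof (rule filterlim_atI)
  show "((of_real :: real \<Rightarrow> 'a) \<longlongrightarrow> 0) (at 0)"
    using tendsto_of_real[OF tendsto_ident_at[of 0 UNIV]] by simp
qed (simp add: eventually_at_filter)

lemma tendsto_difference_quotient_of_real:
  fixes f :: "complex \<Rightarrow> complex"
  assumes "(\<lambda>h. f h - h * c) \<in> O[at 0](\<lambda>h. h ^ 2)"
  shows "((\<lambda>t. (1 / t) *\<^sub>R f (of_real t)) \<longlongrightarrow> c) (at 0)"
proof -
  have "(\<lambda>h. f h - h * c) \<in> o[at 0](\<lambda>h. h)"
    using assms power2_smallo_at_0 by (rule landau_o.big_small_trans)
  then have "(\<lambda>t. f (of_real t) - of_real t * c) \<in> o[at 0](\<lambda>t::real. of_real t)"
    by (rule landau_o.small.compose[OF _ filterlim_of_real_at_0])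
  then have "((\<lambda>t. (f (of_real t) - of_real t * c) / of_real t) \<longlongrightarrow> 0) (at (0::real))"
    by (rule smalloD_tendsto)
  then have "((\<lambda>t. (f (of_real t) - of_real t * c) / of_real t + c) \<longlongrightarrow> c) (at (0::real))"
    using tendsto_add[OF _ tendsto_const[of c]] by fastforce
  moreover have "\<forall>\<^sub>F t in at (0::real).
      (f (of_real t) - of_real t * c) / of_real t + c = (1 / t) *\<^sub>R f (of_real t)"
    by (auto simp: eventually_at_filter scaleR_conv_of_real field_simps)
  ultimately show ?thesis
    by (rule Lim_transform_eventually)
qed

lemma eventually_exp_of_real_near_1:
  assumes "e > 0"
  shows "\<forall>\<^sub>F t in at (0::real).
    exp (complex_of_real t) \<in> ball 1 e \<and> exp (complex_of_real t) \<noteq> 1"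
proof -
  have "((\<lambda>t. exp t) \<longlongrightarrow> 1) (at (0::real))"
    using tendsto_exp[OF tendsto_ident_at, of 0 UNIV] by simp
  then have "\<forall>\<^sub>F t in at (0::real). dist (exp t) 1 < e"
    using assms by (rule tendstoD)
  moreover have "\<forall>\<^sub>F t in at (0::real). t \<noteq> 0"
    by (simp add: eventually_at_filter)
  ultimately show ?thesis
  proof eventually_elim
    case (elim t)
    have "dist 1 (exp (complex_of_real t)) = dist (exp t) 1"
      by (metis dist_commute dist_of_real exp_of_real of_real_1)
    moreover have "exp (complex_of_real t) \<noteq> 1"
      using elim(2) by (metis exp_eq_one_iff exp_of_real of_real_eq_1_iff)
    ultimately show ?case using elim(1) by simp
  qed
qed

section \<open>First-order terms of the Hecke and Yang-Baxter relations\<close>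

lemma commutator_sum_eq_0_if_yang_baxter_family:
  fixes Z1 Z2 Z3 :: "real \<Rightarrow> 'a::real_normed_algebra_1^'n^'n"
  assumes lim: "(Z1 \<longlongrightarrow> a1) (at 0)" "(Z2 \<longlongrightarrow> a2) (at 0)" "(Z3 \<longlongrightarrow> a3) (at 0)"
    and ybe: "\<forall>\<^sub>F t in at 0.
      (mat 1 + t *\<^sub>R Z1 t) ** (mat 1 + t *\<^sub>R Z2 t) ** (mat 1 + t *\<^sub>R Z3 t) =
      (mat 1 + t *\<^sub>R Z3 t) ** (mat 1 + t *\<^sub>R Z2 t) ** (mat 1 + t *\<^sub>R Z1 t)"
  shows "(a1 ** a2 - a2 ** a1) + (a1 ** a3 - a3 ** a1) + (a2 ** a3 - a3 ** a2) = 0"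
proof -
  let ?C = "\<lambda>A B C. (A ** B - B ** A) + (A ** C - C ** A) + (B ** C - C ** B)"
  let ?D = "\<lambda>A B C. C ** B ** A - A ** B ** C"
  have eq: "\<forall>\<^sub>F t in at 0. t *\<^sub>R ?D (Z1 t) (Z2 t) (Z3 t) = ?C (Z1 t) (Z2 t) (Z3 t)"
    using ybe eventually_neq_at_within[of 0]
  proof eventually_elim
    case (elim t)
    then have "t\<^sup>2 *\<^sub>R (t *\<^sub>R ?D (Z1 t) (Z2 t) (Z3 t)) = t\<^sup>2 *\<^sub>R ?C (Z1 t) (Z2 t) (Z3 t)"
      by (simp add: matrix_triple_product_expand matrix_scaleR_mult_scaleR power2_eq_square
          algebra_simps)
    then show ?case
      by (rule scaleR_left_imp_eq[rotated]) (use elim(2) in simp)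
  qed
  have "((\<lambda>t. t *\<^sub>R ?D (Z1 t) (Z2 t) (Z3 t)) \<longlongrightarrow> 0 *\<^sub>R ?D a1 a2 a3) (at 0)"
    by (intro tendsto_intros lim)
  then have lim0: "((\<lambda>t. ?C (Z1 t) (Z2 t) (Z3 t)) \<longlongrightarrow> 0) (at 0)"
    unfolding scaleR_zero_left using eq by (rule Lim_transform_eventually)
  have "((\<lambda>t. ?C (Z1 t) (Z2 t) (Z3 t)) \<longlongrightarrow> ?C a1 a2 a3) (at 0)"
    by (intro tendsto_intros lim)
  from tendsto_unique[OF trivial_limit_at this lim0] show ?thesis .
qed

lemma unitarity_if_hecke_family:
  fixes Z :: "real \<Rightarrow> 'a::real_normed_algebra_1^'n^'n"
  assumes F2: "F ** F = mat 1"
    and lim: "(Z \<longlongrightarrow> r) (at 0)" "((\<lambda>t. s t / t) \<longlongrightarrow> 2) (at 0)"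
    and hecke: "\<forall>\<^sub>F t in at 0. ((mat 1 + t *\<^sub>R Z t) ** F) ** ((mat 1 + t *\<^sub>R Z t) ** F) =
      mat 1 + s t *\<^sub>R ((mat 1 + t *\<^sub>R Z t) ** F)"
  shows "r + F ** r ** F = F + F"
proof -
  have FF: "X ** F ** F = X" for X
    by (simp add: F2 flip: matrix_mul_assoc)
  let ?L = "\<lambda>t. Z t + F ** Z t ** F + t *\<^sub>R (Z t ** F ** Z t ** F)"
  let ?R = "\<lambda>t. (s t / t) *\<^sub>R (F + t *\<^sub>R (Z t ** F))"
  have eq: "\<forall>\<^sub>F t in at 0. ?R t = ?L t"
    using hecke eventually_neq_at_within[of 0]
  proof eventually_elim
    case (elim t)
    have expand: "t *\<^sub>R ?L t = s t *\<^sub>R (F + t *\<^sub>R (Z t ** F))"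
      using elim(1)
      by (simp add: matrix_add_ldistrib matrix_add_rdistrib matrix_scaleR_mult_scaleR
          matrix_scalar_ac matrix_mul_assoc F2 FF power2_eq_square algebra_simps
          flip: scalar_matrix_assoc)
    have "?R t = (1 / t) *\<^sub>R (s t *\<^sub>R (F + t *\<^sub>R (Z t ** F)))"
      unfolding scaleR_scaleR by simp
    also have "\<dots> = ?L t"
      using elim(2) by (simp only: expand[symmetric]) simp
    finally show ?case .
  qed
  have "(?R \<longlongrightarrow> 2 *\<^sub>R (F + 0 *\<^sub>R (r ** F))) (at 0)"
    by (intro tendsto_intros lim)
  then have limL: "(?L \<longlongrightarrow> F + F) (at 0)"
    unfolding scaleR_zero_left add_0_right scaleR_2 using eq by (rule Lim_transform_eventually)
  have "(?L \<longlongrightarrow> r + F ** r ** F + 0 *\<^sub>R (r ** F ** r ** F)) (at 0)"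
    by (intro tendsto_intros lim)
  then have "(?L \<longlongrightarrow> r + F ** r ** F) (at 0)"
    by simp
  from tendsto_unique[OF trivial_limit_at this limL] show ?thesis .
qed

lemma classical_unitarity:
  fixes F r :: "('n::finite) end2" and R :: "real \<Rightarrow> 'n end2"
  assumes F2: "F ** F = mat 1"
    and hecke: "\<forall>\<^sub>F t in at 0. hecke_symmetry (exp (of_real t)) (R t)"
    and lim: "((\<lambda>t. (1 / t) *\<^sub>R (R t ** F - mat 1)) \<longlongrightarrow> r) (at 0)"
  shows "r + bar21 F r = F + F"
proof -
  define Z where "Z t = (1 / t) *\<^sub>R (R t ** F - mat 1)" for t
  define s where "s t = exp t - inverse (exp t)" for t :: real
  have "\<forall>\<^sub>F t in at 0. ((mat 1 + t *\<^sub>R Z t) ** F) ** ((mat 1 + t *\<^sub>R Z t) ** F) =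
      mat 1 + s t *\<^sub>R ((mat 1 + t *\<^sub>R Z t) ** F)"
    using hecke eventually_neq_at_within[of 0]
  proof eventually_elim
    case (elim t)
    have R: "(mat 1 + t *\<^sub>R Z t) ** F = R t"
      using elim(2) by (simp add: Z_def F2 flip: matrix_mul_assoc)
    have "exp (complex_of_real t) - inverse (exp (complex_of_real t)) = of_real (s t)"
      by (simp add: s_def exp_of_real)
    then show ?case
      unfolding R using hecke_square[OF elim(1)] by (simp add: mat_of_real_mult)
  qed
  from unitarity_if_hecke_family[OF F2 lim[folded Z_def]
      tendsto_exp_minus_inverse_exp_div[folded s_def] this]
  show ?thesis
    by (simp add: bar21_def)
qed

lemma classical_yang_baxter:
  fixes F r :: "('n::finite) end2" and R :: "real \<Rightarrow> 'n end2"
  assumes F2: "F ** F = mat 1" and "braiding F"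
    and braid: "\<forall>\<^sub>F t in at 0. braiding (R t) \<and> compatible (R t) F"
    and lim: "((\<lambda>t. (1 / t) *\<^sub>R (R t ** F - mat 1)) \<longlongrightarrow> r) (at 0)"
  shows "commut (bar12 F r) (bar13 F r) + commut (bar12 F r) (bar23 F r)
           + commut (bar13 F r) (bar23 F r) = 0"
proof -
  define S P P' where "S = leg23 F" and "P = leg12 F ** leg23 F" and "P' = leg23 F ** leg12 F"
  have SS: "S ** S = mat 1"
    using F2 by (simp add: S_def leg23_involution)
  have "P ** P' = leg12 F ** (leg23 F ** leg23 F) ** leg12 F"
    by (simp add: P_def P'_def matrix_mul_assoc)
  then have PP': "P ** P' = mat 1"
    using F2 by (simp add: leg12_involution leg23_involution)
  have bars: "bar12 F X = leg12 X" "bar13 F X = S ** leg12 X ** S"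
    "bar23 F X = P ** leg12 X ** P'" for X
    by (simp_all add: bar12_def bar13_involution[OF F2] bar23_involution[OF F2] S_def P_def P'_def)
  define Z where "Z t = (1 / t) *\<^sub>R (R t ** F - mat 1)" for t
  define Y1 Y2 Y3 where "Y1 = (\<lambda>t. leg12 (Z t))" and "Y2 = (\<lambda>t. S ** leg12 (Z t) ** S)"
    and "Y3 = (\<lambda>t. P ** leg12 (Z t) ** P')"
  have "\<forall>\<^sub>F t in at 0.
      (mat 1 + t *\<^sub>R Y1 t) ** (mat 1 + t *\<^sub>R Y2 t) ** (mat 1 + t *\<^sub>R Y3 t) =
      (mat 1 + t *\<^sub>R Y3 t) ** (mat 1 + t *\<^sub>R Y2 t) ** (mat 1 + t *\<^sub>R Y1 t)"
    using braid eventually_neq_at_within[of 0]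
  proof eventually_elim
    case (elim t)
    have "R t ** F = mat 1 + t *\<^sub>R Z t"
      using elim(2) by (simp add: Z_def)
    then have "leg12 (R t ** F) = mat 1 + t *\<^sub>R Y1 t"
      by (simp add: Y1_def leg12_add leg12_scaleR leg12_mat_1)
    then show ?case
      using transferred_yang_baxter[OF F2 \<open>braiding F\<close>, of "R t"] elim(1)
      by (simp add: bars Y1_def Y2_def Y3_def matrix_conj_one_plus_scaleR SS PP')
  qed
  moreover have "(Y1 \<longlongrightarrow> leg12 r) (at 0)" "(Y2 \<longlongrightarrow> S ** leg12 r ** S) (at 0)"
    "(Y3 \<longlongrightarrow> P ** leg12 r ** P') (at 0)"
    unfolding Y1_def Y2_def Y3_def by (intro tendsto_intros lim[folded Z_def])+
  ultimately show ?thesis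
    using commutator_sum_eq_0_if_yang_baxter_family by (simp add: bars commut_def)
qed

theorem mainTheorem1:
  fixes F r :: "('n::finite) end2"
    and R :: "complex \<Rightarrow> 'n end2"
  assumes invF: "involutive_symmetry F"
    and family: "\<exists>e>0. (\<forall>i j. (\<lambda>q. R q $ i $ j) analytic_on ball 1 e) \<and>
                   (\<forall>q\<in>ball 1 e. q \<noteq> 1 \<longrightarrow> hecke_symmetry q (R q)) \<and>
                   (\<forall>q\<in>ball 1 e. compatible (R q) F)"
    and R1: "R 1 = F"
    and expansion: "\<forall>i j. (\<lambda>h. (R (exp h) ** F) $ i $ j - mat 1 $ i $ j - h * r $ i $ j)
                         \<in> O[at 0](\<lambda>h. h ^ 2)"
  shows "r + bar21 F r = F + F \<and>
         commut (bar12 F r) (bar13 F r) + commut (bar12 F r) (bar23 F r)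
           + commut (bar13 F r) (bar23 F r) = 0"
proof -
  obtain e where "e > 0" and hecke: "\<forall>q\<in>ball 1 e. q \<noteq> 1 \<longrightarrow> hecke_symmetry q (R q)"
    and compat: "\<forall>q\<in>ball 1 e. compatible (R q) F"
    using family by blast
  have F2: "F ** F = mat 1" and "braiding F"
    using invF by (simp_all add: involutive_symmetry_def)
  have near: "\<forall>\<^sub>F t in at 0. hecke_symmetry (exp (of_real t)) (R (exp (of_real t))) \<and>
      compatible (R (exp (of_real t))) F"
    using eventually_exp_of_real_near_1[OF \<open>e > 0\<close>] by eventually_elim (simp add: hecke compat)
  have "((\<lambda>t. (1 / t) *\<^sub>R (R (exp (of_real t)) ** F - mat 1) $ i $ j) \<longlongrightarrow> r $ i $ j) (at 0)"
    for i j
  proof -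
    have "(\<lambda>h. (R (exp h) ** F) $ i $ j - mat 1 $ i $ j - h * r $ i $ j) \<in> O[at 0](\<lambda>h. h ^ 2)"
      using expansion by blast
    from tendsto_difference_quotient_of_real[OF this] show ?thesis
      by simp
  qed
  then have lim: "((\<lambda>t. (1 / t) *\<^sub>R (R (exp (of_real t)) ** F - mat 1)) \<longlongrightarrow> r) (at 0)"
    by (auto intro!: vec_tendstoI)
  have "r + bar21 F r = F + F"
    using F2 near lim by (intro classical_unitarity) (auto elim: eventually_mono)
  moreover have "commut (bar12 F r) (bar13 F r) + commut (bar12 F r) (bar23 F r)
           + commut (bar13 F r) (bar23 F r) = 0"
    using F2 \<open>braiding F\<close> near lim
    by (intro classical_yang_baxter) (auto elim: eventually_mono simp: hecke_symmetry_def)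
  ultimately show ?thesis ..
qed

end
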